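(* Let $\mathcal N$ be a class of phylogenetic networks on a set $S$ of taxa such that for all $N_1,N_2\in\mathcal N$, $d_\mu(N_1,N_2)=0$ implies $N_1\cong N_2$. Then for all $N_1,N_2\in\mathcal N$, $m(N_1,N_2)=0$ implies $N_1\cong N_2$.
   Context: A phylogenetic network on $S=\{1,\dots,n\}$ is a finite rooted directed acyclic graph whose leaves are bijectively labeled by $S$; $\cong$ is digraph isomorphism preserving leaf labels. For a node $v$, $\mu(v)=(m_1(v),\dots,m_n(v))$ where $m_i(v)$ is the number of directed paths from $v$ to leaf $i$; $\mu(N)$ is the multiset of $\mu(v)$ over all nodes, and $d_\mu(N_1,N_2)=\frac12|\mu(N_1)\bigtriangleup\mu(N_2)|$. The nested label $\ell(v)$ is defined by induction on height: $\ell(v)=\{i\}$ for the leaf labeled $i$, otherwise the multiset of nested labels of the children of $v$; $\Upsilon(N)$ is the multiset of nested labels of all nodes, and $m(N_1,N_2)=\frac12|\Upsilon(N_1)\bigtriangleup\Upsilon(N_2)|$. Here $\bigtriangleup$ is multiset symmetric difference (multiplicity $|M_1(x)-M_2(x)|$) and $|\cdot|$ is the sum of multiplicities. *)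

theory Defs
  imports Complex_Main "HOL-Library.Multiset"
begin

text \<open>A (candidate) network on the taxa S = {1..n}: a node set, a set of arcs,
  and the leaf labelling (taxon i is attached to node leaf i).\<close>
record 'v network =
  nodes :: "'v set"
  arcs  :: "('v \<times> 'v) set"
  leaf  :: "nat \<Rightarrow> 'v"

definition children :: "'v network \<Rightarrow> 'v \<Rightarrow> 'v set" where
  "children N v = {w. (v, w) \<in> arcs N}"

definition is_leaf_node :: "'v network \<Rightarrow> 'v \<Rightarrow> bool" where
  "is_leaf_node N v \<longleftrightarrow> v \<in> nodes N \<and> children N v = {}"

definition phylo_net :: "nat \<Rightarrow> 'v network \<Rightarrow> bool" where
  "phylo_net n N \<longleftrightarrow>
     finite (nodes N) \<and>
     arcs N \<subseteq> nodes N \<times> nodes N \<and>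
     acyclic (arcs N) \<and>
     (\<exists>r\<in>nodes N. \<forall>v\<in>nodes N. (r, v) \<in> (arcs N)\<^sup>*) \<and>
     bij_betw (leaf N) {1..n} {v. is_leaf_node N v}"

definition net_iso :: "nat \<Rightarrow> 'v network \<Rightarrow> 'w network \<Rightarrow> bool" where
  "net_iso n N1 N2 \<longleftrightarrow>
     (\<exists>f. bij_betw f (nodes N1) (nodes N2) \<and>
          (\<forall>u\<in>nodes N1. \<forall>v\<in>nodes N1. (u, v) \<in> arcs N1 \<longleftrightarrow> (f u, f v) \<in> arcs N2) \<and>
          (\<forall>i\<in>{1..n}. f (leaf N1 i) = leaf N2 i))"

definition is_dpath :: "'v network \<Rightarrow> 'v list \<Rightarrow> bool" where
  "is_dpath N p \<longleftrightarrow> p \<noteq> [] \<and> (\<forall>k. Suc k < length p \<longrightarrow> (p ! k, p ! Suc k) \<in> arcs N)"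

definition num_paths :: "'v network \<Rightarrow> 'v \<Rightarrow> 'v \<Rightarrow> nat" where
  "num_paths N v w = card {p. is_dpath N p \<and> hd p = v \<and> last p = w}"

definition mu_vec :: "nat \<Rightarrow> 'v network \<Rightarrow> 'v \<Rightarrow> nat list" where
  "mu_vec n N v = map (\<lambda>i. num_paths N v (leaf N i)) [1..<Suc n]"

definition mu_rep :: "nat \<Rightarrow> 'v network \<Rightarrow> nat list multiset" where
  "mu_rep n N = image_mset (mu_vec n N) (mset_set (nodes N))"

definition msym_diff :: "'a multiset \<Rightarrow> 'a multiset \<Rightarrow> 'a multiset" where
  "msym_diff M1 M2 = (M1 - M2) + (M2 - M1)"

definition d_mu :: "nat \<Rightarrow> 'v network \<Rightarrow> 'w network \<Rightarrow> real" where
  "d_mu n N1 N2 = real (size (msym_diff (mu_rep n N1) (mu_rep n N2))) / 2"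

datatype nested = NLeaf nat | NNode "nested multiset"

text \<open>Nested label computed with a fuel parameter k; for k at least the height of v
  (in particular for k = card of the node set) this is the inductive definition on height.\<close>
fun nlabel_fuel :: "nat \<Rightarrow> 'v network \<Rightarrow> nat \<Rightarrow> 'v \<Rightarrow> nested" where
  "nlabel_fuel n N 0 v =
     (if \<exists>i\<in>{1..n}. leaf N i = v then NLeaf (SOME i. i \<in> {1..n} \<and> leaf N i = v)
      else NNode {#})"
| "nlabel_fuel n N (Suc k) v =
     (if \<exists>i\<in>{1..n}. leaf N i = v then NLeaf (SOME i. i \<in> {1..n} \<and> leaf N i = v)
      else NNode (image_mset (nlabel_fuel n N k) (mset_set (children N v))))"

definition nlabel :: "nat \<Rightarrow> 'v network \<Rightarrow> 'v \<Rightarrow> nested" where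
  "nlabel n N v = nlabel_fuel n N (card (nodes N)) v"

definition Upsilon :: "nat \<Rightarrow> 'v network \<Rightarrow> nested multiset" where
  "Upsilon n N = image_mset (nlabel n N) (mset_set (nodes N))"

definition m_dist :: "nat \<Rightarrow> 'v network \<Rightarrow> 'w network \<Rightarrow> real" where
  "m_dist n N1 N2 = real (size (msym_diff (Upsilon n N1) (Upsilon n N2))) / 2"

end

theory Submission
  imports Defs
begin

text \<open>
  The nested label of a node determines its path-count vector: if \<open>leaf_count x i\<close> counts,
  with multiplicity and through all levels of nesting, the occurrences of taxon \<open>i\<close> in a
  nested label \<open>x\<close>, then \<open>m\<^sub>i(v) = leaf_count (\<ell>(v)) i\<close>, since both sides are \<open>[v = leaf i]\<close>
  at leaves and are summed over the children of \<open>v\<close> otherwise. Hence \<open>\<mu>(N)\<close> is the image of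
  \<open>\<Upsilon>(N)\<close> under one fixed map, so \<open>\<Upsilon>(N\<^sub>1) = \<Upsilon>(N\<^sub>2)\<close> forces \<open>\<mu>(N\<^sub>1) = \<mu>(N\<^sub>2)\<close>: \<open>m = 0\<close> implies \<open>d\<^sub>\<mu> = 0\<close>.
\<close>

primrec leaf_count :: "nested \<Rightarrow> nat \<Rightarrow> nat" where
  "leaf_count (NLeaf j) i = (if i = j then 1 else 0)"
| "leaf_count (NNode M) i = (\<Sum>x\<in>#M. leaf_count x i)"

definition finite_dag :: "'v network \<Rightarrow> bool" where
  "finite_dag N \<longleftrightarrow> finite (nodes N) \<and> arcs N \<subseteq> nodes N \<times> nodes N \<and> acyclic (arcs N)"

lemma phylo_net_finite_dag: "phylo_net n N \<Longrightarrow> finite_dag N"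
  by (simp add: phylo_net_def finite_dag_def)

lemma phylo_net_leaf_image:
  "phylo_net n N \<Longrightarrow> leaf N ` {1..n} = {v \<in> nodes N. children N v = {}}"
  unfolding phylo_net_def is_leaf_node_def by (auto dest: bij_betw_imp_surj_on)

lemma phylo_net_children_nonempty:
  assumes "phylo_net n N" "v \<in> nodes N" "\<forall>j\<in>{1..n}. leaf N j \<noteq> v"
  shows "children N v \<noteq> {}"
  using assms(2,3) phylo_net_leaf_image[OF assms(1)]
  by (metis (mono_tags) image_iff mem_Collect_eq)

lemma phylo_net_inj_leaf: "phylo_net n N \<Longrightarrow> inj_on (leaf N) {1..n}"
  unfolding phylo_net_def by (auto dest: bij_betw_imp_inj_on)

lemma is_dpath_Nil [simp]: "\<not> is_dpath N []"
  by (simp add: is_dpath_def)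

lemma is_dpath_Cons:
  "is_dpath N (v # p) \<longleftrightarrow> p = [] \<or> (v, hd p) \<in> arcs N \<and> is_dpath N p"
  by (cases p) (auto simp: is_dpath_def nth_Cons split: nat.splits)

lemma is_dpath_Cons_child:
  assumes "c \<in> children N v" "is_dpath N p" "hd p = c"
  shows "is_dpath N (v # p)"
  using assms by (simp add: is_dpath_Cons children_def)

lemma dpath_reaches:
  assumes "is_dpath N (v # p)" "x \<in> set p"
  shows "(v, x) \<in> (arcs N)\<^sup>+"
  using assms
proof (induction p arbitrary: v)
  case (Cons u p)
  have vu: "(v, u) \<in> arcs N" using Cons.prems(1) by (simp add: is_dpath_Cons)
  show ?case
  proof (cases "x = u")
    case False
    then have "(u, x) \<in> (arcs N)\<^sup>+" using Cons by (auto simp: is_dpath_Cons)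
    with vu show ?thesis by (rule trancl_into_trancl2)
  qed (simp add: vu r_into_trancl)
qed simp

lemma distinct_dpath:
  assumes "acyclic (arcs N)" "is_dpath N p"
  shows "distinct p"
  using assms(2)
proof (induction p)
  case (Cons v p)
  have "v \<notin> set p" using dpath_reaches[OF Cons.prems] assms(1) by (auto simp: acyclic_def)
  with Cons show ?case by (auto simp: is_dpath_Cons)
qed simp

lemma dpath_subset_nodes:
  assumes "arcs N \<subseteq> nodes N \<times> nodes N" "is_dpath N p" "hd p \<in> nodes N"
  shows "set p \<subseteq> nodes N"
proof -
  obtain v q where p: "p = v # q" using assms(2) by (cases p) auto
  have "x \<in> nodes N" if "x \<in> set q" for x
    using dpath_reaches[of N v q x] that assms p by (auto dest!: tranclD2)
  then show ?thesis using assms(3) p by auto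
qed

lemma length_dpath_le_card:
  assumes "finite_dag N" "is_dpath N p" "hd p \<in> nodes N"
  shows "length p \<le> card (nodes N)"
  using assms distinct_dpath[of N p] dpath_subset_nodes[of N p]
  unfolding finite_dag_def by (metis card_mono distinct_card)

definition dpaths :: "'v network \<Rightarrow> 'v \<Rightarrow> 'v \<Rightarrow> 'v list set" where
  "dpaths N v w = {p. is_dpath N p \<and> hd p = v \<and> last p = w}"

lemma num_paths_eq_card_dpaths: "num_paths N v w = card (dpaths N v w)"
  by (simp add: num_paths_def dpaths_def)

lemma finite_dpaths:
  assumes "finite_dag N" "v \<in> nodes N"
  shows "finite (dpaths N v w)"
proof (rule finite_subset)
  show "dpaths N v w \<subseteq> {p. set p \<subseteq> nodes N \<and> distinct p}"
    using assms dpath_subset_nodes distinct_dpath unfolding dpaths_def finite_dag_def by blast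
  show "finite {p. set p \<subseteq> nodes N \<and> distinct p}"
    using assms finite_subset_distinct unfolding finite_dag_def by blast
qed

lemma dpaths_eq_UN_children:
  assumes "v \<noteq> w"
  shows "dpaths N v w = (\<Union>c\<in>children N v. Cons v ` dpaths N c w)"
proof (intro equalityI subsetI)
  fix p assume "p \<in> dpaths N v w"
  then obtain q where q: "p = v # q" "is_dpath N p" "last p = w"
    unfolding dpaths_def by (cases p) auto
  with assms have "q \<noteq> []" by auto
  with q have "hd q \<in> children N v" "q \<in> dpaths N (hd q) w"
    unfolding dpaths_def children_def by (auto simp: is_dpath_Cons)
  with q(1) show "p \<in> (\<Union>c\<in>children N v. Cons v ` dpaths N c w)" by blast
qed (auto simp: dpaths_def children_def is_dpath_Cons)

lemma num_paths_eq_sum_children: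
  assumes "finite_dag N" "v \<in> nodes N" "v \<noteq> w"
  shows "num_paths N v w = (\<Sum>c\<in>children N v. num_paths N c w)"
proof -
  have children: "children N v \<subseteq> nodes N"
    using assms(1) unfolding finite_dag_def children_def by auto
  then have "finite (children N v)"
    using assms(1) finite_subset unfolding finite_dag_def by blast
  have "num_paths N v w = card (\<Union>c\<in>children N v. Cons v ` dpaths N c w)"
    by (simp add: num_paths_eq_card_dpaths dpaths_eq_UN_children[OF assms(3)])
  also have "\<dots> = (\<Sum>c\<in>children N v. card (Cons v ` dpaths N c w))"
    using children \<open>finite (children N v)\<close> finite_dpaths[OF assms(1)]
    by (intro card_UN_disjoint) (auto simp: dpaths_def)
  also have "\<dots> = (\<Sum>c\<in>children N v. num_paths N c w)"
    by (simp add: num_paths_eq_card_dpaths card_image)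
  finally show ?thesis .
qed

lemma num_paths_from_sink:
  assumes "children N u = {}"
  shows "num_paths N u w = (if u = w then 1 else 0)"
proof -
  have no_arc: "(u, y) \<notin> arcs N" for y
    using assms unfolding children_def by blast
  have single: "p = [u]" if "is_dpath N p" "hd p = u" for p
  proof (cases p)
    case (Cons x q)
    with that no_arc show ?thesis by (cases q) (auto simp: is_dpath_Cons)
  qed (use that in simp)
  then have "dpaths N u w \<subseteq> {[u]}"
    unfolding dpaths_def by blast
  moreover have "[u] \<in> dpaths N u w \<longleftrightarrow> u = w"
    by (simp add: dpaths_def is_dpath_Cons)
  ultimately have "dpaths N u w = (if u = w then {[u]} else {})"
    by auto
  then show ?thesis by (simp add: num_paths_eq_card_dpaths)
qed

lemma nlabel_fuel_leaf:
  assumes "inj_on (leaf N) {1..n}" "j \<in> {1..n}"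
  shows "nlabel_fuel n N k (leaf N j) = NLeaf j"
proof -
  have is_leaf: "\<exists>i\<in>{1..n}. leaf N i = leaf N j"
    using assms(2) by blast
  have label: "(SOME i. i \<in> {1..n} \<and> leaf N i = leaf N j) = j"
    using assms by (intro some_equality) (auto dest: inj_onD)
  show ?thesis
    by (cases k) (simp_all only: nlabel_fuel.simps is_leaf label if_True)
qed

lemma num_paths_between_leaves:
  assumes N: "phylo_net n N" and "i \<in> {1..n}" "j \<in> {1..n}"
  shows "num_paths N (leaf N j) (leaf N i) = leaf_count (nlabel_fuel n N k (leaf N j)) i"
proof -
  have "children N (leaf N j) = {}"
    using assms(3) phylo_net_leaf_image[OF N] by blast
  moreover have "leaf N j = leaf N i \<longleftrightarrow> j = i"
    using phylo_net_inj_leaf[OF N] assms(2,3) by (auto dest: inj_onD)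
  ultimately show ?thesis
    by (simp add: num_paths_from_sink nlabel_fuel_leaf[OF phylo_net_inj_leaf[OF N] assms(3)])
qed

lemma num_paths_to_leaf_eq_leaf_count:
  assumes N: "phylo_net n N" and i: "i \<in> {1..n}"
  shows "v \<in> nodes N \<Longrightarrow> \<forall>p. is_dpath N p \<and> hd p = v \<longrightarrow> length p \<le> Suc k
    \<Longrightarrow> num_paths N v (leaf N i) = leaf_count (nlabel_fuel n N k v) i"
proof (induction k arbitrary: v)
  case 0
  show ?case
  proof (cases "\<exists>j\<in>{1..n}. leaf N j = v")
    case False
    then obtain c where "c \<in> children N v"
      using phylo_net_children_nonempty[OF N 0(1)] by blast
    then have "is_dpath N [v, c]"
      by (simp add: is_dpath_Cons children_def)
    with 0 show ?thesis by fastforce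
  qed (use num_paths_between_leaves[OF N i] in blast)
next
  case (Suc k)
  show ?case
  proof (cases "\<exists>j\<in>{1..n}. leaf N j = v")
    case False
    have IH: "num_paths N c (leaf N i) = leaf_count (nlabel_fuel n N k c) i"
      if c: "c \<in> children N v" for c
    proof (rule Suc.IH)
      show "c \<in> nodes N"
        using c N unfolding phylo_net_def children_def by auto
      show "\<forall>p. is_dpath N p \<and> hd p = c \<longrightarrow> length p \<le> Suc k"
        using Suc.prems(2) is_dpath_Cons_child[OF c] by fastforce
    qed
    have "num_paths N v (leaf N i) = (\<Sum>c\<in>children N v. num_paths N c (leaf N i))"
      using False i Suc.prems(1) phylo_net_finite_dag[OF N]
      by (intro num_paths_eq_sum_children) auto
    also have "\<dots> = (\<Sum>c\<in>children N v. leaf_count (nlabel_fuel n N k c) i)"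
      using IH by simp
    also have "\<dots> = leaf_count (nlabel_fuel n N (Suc k) v) i"
      using False by (simp add: sum_unfold_sum_mset multiset.map_comp o_def)
    finally show ?thesis .
  qed (use num_paths_between_leaves[OF N i] in blast)
qed

lemma mu_vec_eq_leaf_counts:
  assumes N: "phylo_net n N" and v: "v \<in> nodes N"
  shows "mu_vec n N v = map (leaf_count (nlabel n N v)) [1..<Suc n]"
  unfolding mu_vec_def nlabel_def
proof (rule map_cong[OF refl])
  fix i assume "i \<in> set [1..<Suc n]"
  then have i: "i \<in> {1..n}" by auto
  have "length p \<le> Suc (card (nodes N))" if "is_dpath N p" "hd p = v" for p
    using length_dpath_le_card[OF phylo_net_finite_dag[OF N]] that v by fastforce
  then show "num_paths N v (leaf N i) = leaf_count (nlabel_fuel n N (card (nodes N)) v) i"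
    using num_paths_to_leaf_eq_leaf_count[OF N i v] by blast
qed

lemma mu_rep_eq_image_Upsilon:
  assumes "phylo_net n N"
  shows "mu_rep n N = image_mset (\<lambda>x. map (leaf_count x) [1..<Suc n]) (Upsilon n N)"
  unfolding mu_rep_def Upsilon_def multiset.map_comp o_def
proof (rule image_mset_cong)
  fix v assume "v \<in># mset_set (nodes N)"
  then have "v \<in> nodes N"
    using elem_mset_set by (cases "finite (nodes N)") auto
  then show "mu_vec n N v = map (leaf_count (nlabel n N v)) [1..<Suc n]"
    using assms by (rule mu_vec_eq_leaf_counts[rotated])
qed

lemma msym_diff_eq_empty_iff: "msym_diff A B = {#} \<longleftrightarrow> A = B"
  by (auto simp: msym_diff_def Diff_eq_empty_iff_mset intro: subset_mset.antisym)

lemma d_mu_eq_0_if_m_dist_eq_0: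
  assumes "phylo_net n N1" "phylo_net n N2" "m_dist n N1 N2 = 0"
  shows "d_mu n N1 N2 = 0"
proof -
  have "Upsilon n N1 = Upsilon n N2"
    using assms(3) by (simp add: m_dist_def msym_diff_eq_empty_iff)
  then have "mu_rep n N1 = mu_rep n N2"
    using assms(1,2) by (simp add: mu_rep_eq_image_Upsilon)
  then show ?thesis
    by (simp add: d_mu_def msym_diff_def)
qed

theorem corollary2:
  fixes n :: nat and NN :: "'v network set"
  assumes "\<forall>N\<in>NN. phylo_net n N"
    and "\<forall>N1\<in>NN. \<forall>N2\<in>NN. d_mu n N1 N2 = 0 \<longrightarrow> net_iso n N1 N2"
  shows "\<forall>N1\<in>NN. \<forall>N2\<in>NN. m_dist n N1 N2 = 0 \<longrightarrow> net_iso n N1 N2"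
  using assms d_mu_eq_0_if_m_dist_eq_0 by blast

end
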